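(* Let $(\mathcal E,B,\mathcal L_{\mathcal P})$ be an epistemic space and $\mathcal S$ a set of agents. An ES combination operator $\nabla$ is an ES basic fusion operator if and only if there exists a unique basic assignment $\Phi\mapsto\succeq_\Phi$ such that for every profile $\Phi$ and every $E\in\mathcal E$, $$[\![B(\nabla(\Phi,E))]\!]=\max\big([\![B(E)]\!],\succeq_\Phi\big).$$
   Context: $\mathcal L_{\mathcal P}$ is the set of propositional formulas over a finite set $\mathcal P$ of variables, $\mathcal W_{\mathcal P}$ its set of valuations, $[\![\phi]\!]$ the set of models of $\phi$. An epistemic space is a triple $(\mathcal E,B,\mathcal L_{\mathcal P})$ with $\mathcal E$ a nonempty set and $B:\mathcal E\to\mathcal L_{\mathcal P}$ whose image modulo logical equivalence is exactly the set of consistent formulas modulo equivalence. Agents form a well-ordered set $(\mathcal S,<)$; a society is a nonempty finite $N\subseteq\mathcal S$; an $N$-profile is a function $\Phi:N\to\mathcal E$, $E_i:=\Phi(i)$; for $N=\{i\}$ it is identified with $E_i$. Profiles $\Phi$ on $N=\{i_1<\dots<i_n\}$ and $\Psi$ on $M=\{j_1<\dots<j_m\}$ are equivalent, $\Phi\equiv\Psi$, if $n=m$ and $\Phi(i_k)=\Psi(j_k)$ for all $k$. An ES combination operator $\nabla$ assigns to every profile $\Phi$ and every $E\in\mathcal E$ an element $\nabla(\Phi,E)\in\mathcal E$. It is an ES basic fusion operator if for all profiles $\Phi,\Phi'$ and $E,E',E''$: (ESF1) $B(\nabla(\Phi,E))\vdash B(E)$; (ESF2) if $\Phi\equiv\Phi'$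 and $B(E)\equiv B(E')$ then $B(\nabla(\Phi,E))\equiv B(\nabla(\Phi',E'))$; (ESF3) if $B(E)\equiv B(E')\wedge B(E'')$ then $B(\nabla(\Phi,E'))\wedge B(E'')\vdash B(\nabla(\Phi,E))$; (ESF4) if $B(E)\equiv B(E')\wedge B(E'')$ and $B(\nabla(\Phi,E'))\wedge B(E'')\nvdash\bot$ then $B(\nabla(\Phi,E))\vdash B(\nabla(\Phi,E'))\wedge B(E'')$. An assignment maps each profile $\Phi$ to a total preorder $\succeq_\Phi$ on $\mathcal W_{\mathcal P}$; it is basic if $\Phi\equiv\Psi$ implies $\succeq_\Phi=\succeq_\Psi$. For a total preorder $\succeq$ and set $C$, $\max(C,\succeq)=\{c\in C:\ c\succeq x\text{ for all }x\in C\}$. *)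

theory Defs
  imports Main
begin

datatype 'p form =
    Atom 'p
  | Bot
  | Neg "'p form"
  | Conj "'p form" "'p form"
  | Disj "'p form" "'p form"
  | Imp "'p form" "'p form"

type_synonym 'p valuation = "'p set"

fun sat :: "'p valuation \<Rightarrow> 'p form \<Rightarrow> bool" where
  "sat w (Atom p) = (p \<in> w)"
| "sat w Bot = False"
| "sat w (Neg f) = (\<not> sat w f)"
| "sat w (Conj f g) = (sat w f \<and> sat w g)"
| "sat w (Disj f g) = (sat w f \<or> sat w g)"
| "sat w (Imp f g) = (sat w f \<longrightarrow> sat w g)"

definition models :: "'p form \<Rightarrow> 'p valuation set" where
  "models f = {w. sat w f}"

definition entails :: "'p form \<Rightarrow> 'p form \<Rightarrow> bool" (infix "\<turnstile>\<^sub>P" 55) where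
  "f \<turnstile>\<^sub>P g \<longleftrightarrow> models f \<subseteq> models g"

definition lequiv :: "'p form \<Rightarrow> 'p form \<Rightarrow> bool" (infix "\<equiv>\<^sub>P" 55) where
  "f \<equiv>\<^sub>P g \<longleftrightarrow> models f = models g"

definition consistent :: "'p form \<Rightarrow> bool" where
  "consistent f \<longleftrightarrow> \<not> (f \<turnstile>\<^sub>P Bot)"

definition epistemic_space :: "('e \<Rightarrow> 'p form) \<Rightarrow> bool" where
  "epistemic_space B \<longleftrightarrow>
     (\<forall>e. consistent (B e)) \<and> (\<forall>f. consistent f \<longrightarrow> (\<exists>e. B e \<equiv>\<^sub>P f))"

text \<open>Agents form the well-ordered type 's. A profile is a partial map from agents to
  epistemic states whose domain (the society) is finite and nonempty.\<close>
definition is_profile :: "('s \<rightharpoonup> 'e) \<Rightarrow> bool" where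
  "is_profile \<Phi> \<longleftrightarrow> finite (dom \<Phi>) \<and> dom \<Phi> \<noteq> {}"

definition profile_list :: "('s::linorder \<rightharpoonup> 'e) \<Rightarrow> 'e list" where
  "profile_list \<Phi> = map (\<lambda>i. the (\<Phi> i)) (sorted_list_of_set (dom \<Phi>))"

definition profile_equiv :: "('s::linorder \<rightharpoonup> 'e) \<Rightarrow> ('s \<rightharpoonup> 'e) \<Rightarrow> bool" where
  "profile_equiv \<Phi> \<Psi> \<longleftrightarrow> profile_list \<Phi> = profile_list \<Psi>"

definition es_basic_fusion ::
  "('e \<Rightarrow> 'p form) \<Rightarrow> (('s::wellorder \<rightharpoonup> 'e) \<Rightarrow> 'e \<Rightarrow> 'e) \<Rightarrow> bool" where
  "es_basic_fusion B nabla \<longleftrightarrow>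
     (\<forall>\<Phi> E. is_profile \<Phi> \<longrightarrow> B (nabla \<Phi> E) \<turnstile>\<^sub>P B E) \<and>
     (\<forall>\<Phi> \<Phi>' E E'. is_profile \<Phi> \<longrightarrow> is_profile \<Phi>' \<longrightarrow>
         profile_equiv \<Phi> \<Phi>' \<longrightarrow> B E \<equiv>\<^sub>P B E' \<longrightarrow>
         B (nabla \<Phi> E) \<equiv>\<^sub>P B (nabla \<Phi>' E')) \<and>
     (\<forall>\<Phi> E E' E''. is_profile \<Phi> \<longrightarrow> B E \<equiv>\<^sub>P Conj (B E') (B E'') \<longrightarrow>
         Conj (B (nabla \<Phi> E')) (B E'') \<turnstile>\<^sub>P B (nabla \<Phi> E)) \<and>
     (\<forall>\<Phi> E E' E''. is_profile \<Phi> \<longrightarrow> B E \<equiv>\<^sub>P Conj (B E') (B E'') \<longrightarrow>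
         \<not> (Conj (B (nabla \<Phi> E')) (B E'') \<turnstile>\<^sub>P Bot) \<longrightarrow>
         B (nabla \<Phi> E) \<turnstile>\<^sub>P Conj (B (nabla \<Phi> E')) (B E''))"

definition total_preorder :: "('a \<Rightarrow> 'a \<Rightarrow> bool) \<Rightarrow> bool" where
  "total_preorder r \<longleftrightarrow> (\<forall>x y z. r x y \<longrightarrow> r y z \<longrightarrow> r x z) \<and> (\<forall>x y. r x y \<or> r y x)"

text \<open>An assignment maps each profile to a total preorder on valuations
  (its values on non-profiles are irrelevant).\<close>
definition assignment :: "(('s \<rightharpoonup> 'e) \<Rightarrow> ('p valuation \<Rightarrow> 'p valuation \<Rightarrow> bool)) \<Rightarrow> bool" where
  "assignment A \<longleftrightarrow> (\<forall>\<Phi>. is_profile \<Phi> \<longrightarrow> total_preorder (A \<Phi>))"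

definition basic_assignment ::
  "(('s::linorder \<rightharpoonup> 'e) \<Rightarrow> ('p valuation \<Rightarrow> 'p valuation \<Rightarrow> bool)) \<Rightarrow> bool" where
  "basic_assignment A \<longleftrightarrow> assignment A \<and>
     (\<forall>\<Phi> \<Psi>. is_profile \<Phi> \<longrightarrow> is_profile \<Psi> \<longrightarrow> profile_equiv \<Phi> \<Psi> \<longrightarrow> A \<Phi> = A \<Psi>)"

definition max_set :: "'a set \<Rightarrow> ('a \<Rightarrow> 'a \<Rightarrow> bool) \<Rightarrow> 'a set" where
  "max_set C r = {c \<in> C. \<forall>x\<in>C. r c x}"

definition represents ::
  "('e \<Rightarrow> 'p form) \<Rightarrow> (('s \<rightharpoonup> 'e) \<Rightarrow> 'e \<Rightarrow> 'e)
     \<Rightarrow> (('s \<rightharpoonup> 'e) \<Rightarrow> ('p valuation \<Rightarrow> 'p valuation \<Rightarrow> bool)) \<Rightarrow> bool" where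
  "represents B nabla A \<longleftrightarrow>
     (\<forall>\<Phi> E. is_profile \<Phi> \<longrightarrow> models (B (nabla \<Phi> E)) = max_set (models (B E)) (A \<Phi>))"

end

theory Submission
  imports Defs
begin

text \<open>Since an epistemic space realises every nonempty set of valuations, a fusion operator
  induces, for each profile \<open>\<Phi>\<close>, a choice function \<open>G([B E]) = [B(\<nabla>(\<Phi>, E))]\<close> on nonempty
  sets of valuations, well defined by ESF2. ESF1 makes \<open>G S \<subseteq> S\<close>, consistency makes \<open>G S\<close>
  nonempty, and ESF3/ESF4 are Sen's contraction and expansion conditions. Such a choice function
  is exactly maximisation of its revealed preference \<open>w \<succeq> w' \<longleftrightarrow> w \<in> G{w, w'}\<close>, a total
  preorder, and ESF2 makes this assignment basic. A total preorder is determined by its maxima on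
  pairs, whence uniqueness. Conversely, maximisation of a total preorder satisfies ESF1--ESF4.\<close>

lemma models_Conj [simp]: "models (Conj f g) = models f \<inter> models g"
  by (auto simp: models_def)

lemma models_Bot [simp]: "models Bot = {}"
  by (auto simp: models_def)

lemma ex_form_agreeing_on:
  assumes "finite P"
  shows "\<exists>f. \<forall>v. sat v f \<longleftrightarrow> (\<forall>p\<in>P. p \<in> v \<longleftrightarrow> p \<in> w)"
  using assms
proof (induction P rule: finite_induct)
  case empty
  have "\<forall>v. sat v (Neg Bot)" by simp
  then show ?case by blast
next
  case (insert p P)
  then obtain f where "\<forall>v. sat v f \<longleftrightarrow> (\<forall>q\<in>P. q \<in> v \<longleftrightarrow> q \<in> w)" by blast
  then have "\<forall>v. sat v (Conj (if p \<in> w then Atom p else Neg (Atom p)) f)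
                 \<longleftrightarrow> (\<forall>q\<in>insert p P. q \<in> v \<longleftrightarrow> q \<in> w)"
    by auto
  then show ?case by blast
qed

lemma ex_form_models:
  fixes S :: "'p::finite valuation set"
  shows "\<exists>f. models f = S"
proof -
  have "finite S" by simp
  then show ?thesis
  proof (induction S rule: finite_induct)
    case empty
    show ?case using models_Bot by blast
  next
    case (insert w S)
    then obtain f where f: "models f = S" by blast
    obtain g :: "'p form" where "\<forall>v. sat v g \<longleftrightarrow> (\<forall>p\<in>UNIV. p \<in> v \<longleftrightarrow> p \<in> w)"
      using ex_form_agreeing_on[of UNIV w] finite_UNIV by blast
    then have "models g = {w}" by (auto simp: models_def)
    then have "models (Disj g f) = insert w S" using f by (auto simp: models_def)
    then show ?case by blast
  qed
qed

lemma epistemic_space_models_nonempty: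
  assumes "epistemic_space B"
  shows "models (B e) \<noteq> {}"
  using assms by (auto simp: epistemic_space_def consistent_def entails_def)

definition state_of :: "('e \<Rightarrow> 'p form) \<Rightarrow> 'p valuation set \<Rightarrow> 'e" where
  "state_of B S = (SOME e. models (B e) = S)"

lemma models_state_of:
  fixes B :: "'e \<Rightarrow> 'p::finite form"
  assumes "epistemic_space B" and "S \<noteq> {}"
  shows "models (B (state_of B S)) = S"
proof -
  obtain f :: "'p form" where f: "models f = S" using ex_form_models by blast
  then have "consistent f" using assms(2) by (auto simp: consistent_def entails_def)
  then obtain e where "B e \<equiv>\<^sub>P f" using assms(1) by (auto simp: epistemic_space_def)
  then have "models (B e) = S" using f by (simp add: lequiv_def)
  then show ?thesis unfolding state_of_def by (rule someI)
qed

lemma max_set_subset: "max_set S r \<subseteq> S"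
  by (auto simp: max_set_def)

lemma max_set_inter_subset: "max_set S r \<inter> T \<subseteq> max_set (S \<inter> T) r"
  by (auto simp: max_set_def)

lemma max_set_inter_if_meets:
  assumes "total_preorder r" and "max_set S r \<inter> T \<noteq> {}"
  shows "max_set (S \<inter> T) r \<subseteq> max_set S r \<inter> T"
proof
  fix c assume c: "c \<in> max_set (S \<inter> T) r"
  obtain d where d: "d \<in> max_set S r" "d \<in> T" using assms(2) by blast
  then have "r c d" using c by (auto simp: max_set_def)
  with d(1) have "r c x" if "x \<in> S" for x
    using assms(1) that unfolding total_preorder_def max_set_def by blast
  then show "c \<in> max_set S r \<inter> T" using c by (auto simp: max_set_def)
qed

lemma total_preorder_iff_max_set_pair:
  assumes "total_preorder r"
  shows "r w w' \<longleftrightarrow> w \<in> max_set {w, w'} r"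
  using assms unfolding total_preorder_def max_set_def by blast

lemma total_preorder_eqI_max_set_pairs:
  assumes "total_preorder r" and "total_preorder r'"
    and "\<And>w w'. max_set {w, w'} r = max_set {w, w'} r'"
  shows "r = r'"
proof (intro ext)
  fix w w'
  show "r w w' = r' w w'"
    using assms(3)[of w w'] total_preorder_iff_max_set_pair[OF assms(1)]
      total_preorder_iff_max_set_pair[OF assms(2)] by simp
qed

definition revealed_pref :: "('a set \<Rightarrow> 'a set) \<Rightarrow> 'a \<Rightarrow> 'a \<Rightarrow> bool" where
  "revealed_pref G w w' \<longleftrightarrow> w \<in> G {w, w'}"

context
  fixes G :: "'a set \<Rightarrow> 'a set"
  assumes choice_subset: "\<And>S. S \<noteq> {} \<Longrightarrow> G S \<subseteq> S"
    and choice_nonempty: "\<And>S. S \<noteq> {} \<Longrightarrow> G S \<noteq> {}"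
    and choice_contraction: "\<And>S T. T \<noteq> {} \<Longrightarrow> T \<subseteq> S \<Longrightarrow> G S \<inter> T \<subseteq> G T"
    and choice_expansion: "\<And>S T. T \<subseteq> S \<Longrightarrow> G S \<inter> T \<noteq> {} \<Longrightarrow> G T = G S \<inter> T"
begin

lemma choice_eq_max_set_revealed_pref:
  assumes "S \<noteq> {}"
  shows "G S = max_set S (revealed_pref G)"
proof
  show "G S \<subseteq> max_set S (revealed_pref G)"
  proof
    fix c assume c: "c \<in> G S"
    then have "c \<in> S" using choice_subset assms by blast
    then show "c \<in> max_set S (revealed_pref G)"
      using c choice_contraction[of "{c, _}" S]
      by (auto simp: max_set_def revealed_pref_def)
  qed
next
  show "max_set S (revealed_pref G) \<subseteq> G S"
  proof
    fix c assume "c \<in> max_set S (revealed_pref G)"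
    then have c: "c \<in> S" and dominates: "\<forall>x\<in>S. c \<in> G {c, x}"
      by (auto simp: max_set_def revealed_pref_def)
    obtain d where d: "d \<in> G S" using choice_nonempty[OF assms] by blast
    then have "d \<in> S" using choice_subset assms by blast
    then have "G {c, d} = G S \<inter> {c, d}" using choice_expansion[of "{c, d}" S] c d by blast
    then show "c \<in> G S" using dominates \<open>d \<in> S\<close> by blast
  qed
qed

lemma revealed_pref_chosen:
  assumes "revealed_pref G x y" and "y \<in> G T" and "x \<in> T" and "y \<in> T"
  shows "x \<in> G T"
proof -
  have "G {x, y} = G T \<inter> {x, y}" using choice_expansion[of "{x, y}" T] assms(2-4) by blast
  then show ?thesis using assms(1) by (auto simp: revealed_pref_def)
qed

lemma total_preorder_revealed_pref: "total_preorder (revealed_pref G)"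
  unfolding total_preorder_def
proof (intro conjI allI impI)
  fix x y z assume xy: "revealed_pref G x y" and yz: "revealed_pref G y z"
  define T where "T = {x, y, z}"
  obtain d where d: "d \<in> G T" using choice_nonempty[of T] by (auto simp: T_def)
  then have "d \<in> T" using choice_subset[of T] by (auto simp: T_def)
  then have "x \<in> G T"
    using d revealed_pref_chosen[OF xy, of T] revealed_pref_chosen[OF yz, of T]
    by (auto simp: T_def)
  then show "revealed_pref G x z"
    using choice_contraction[of "{x, z}" T] by (auto simp: T_def revealed_pref_def)
next
  fix x y
  show "revealed_pref G x y \<or> revealed_pref G y x"
    using choice_subset[of "{x, y}"] choice_nonempty[of "{x, y}"]
    by (auto simp: revealed_pref_def insert_commute)
qed

end

lemma es_basic_fusionD:
  assumes "es_basic_fusion B nabla" and "is_profile \<Phi>"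
  shows es_basic_fusion_success: "B (nabla \<Phi> E) \<turnstile>\<^sub>P B E"
    and es_basic_fusion_syntax_irrelevance:
      "is_profile \<Phi>' \<Longrightarrow> profile_equiv \<Phi> \<Phi>' \<Longrightarrow> B E \<equiv>\<^sub>P B E' \<Longrightarrow>
         B (nabla \<Phi> E) \<equiv>\<^sub>P B (nabla \<Phi>' E')"
    and es_basic_fusion_conj_le:
      "B E \<equiv>\<^sub>P Conj (B E') (B E'') \<Longrightarrow> Conj (B (nabla \<Phi> E')) (B E'') \<turnstile>\<^sub>P B (nabla \<Phi> E)"
    and es_basic_fusion_conj_ge:
      "B E \<equiv>\<^sub>P Conj (B E') (B E'') \<Longrightarrow> \<not> (Conj (B (nabla \<Phi> E')) (B E'') \<turnstile>\<^sub>P Bot) \<Longrightarrow>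
         B (nabla \<Phi> E) \<turnstile>\<^sub>P Conj (B (nabla \<Phi> E')) (B E'')"
  using assms unfolding es_basic_fusion_def by blast+

definition fusion_choice ::
  "('e \<Rightarrow> 'p form) \<Rightarrow> (('s \<rightharpoonup> 'e) \<Rightarrow> 'e \<Rightarrow> 'e) \<Rightarrow> ('s \<rightharpoonup> 'e) \<Rightarrow> 'p valuation set \<Rightarrow> 'p valuation set"
  where "fusion_choice B nabla \<Phi> S = models (B (nabla \<Phi> (state_of B S)))"

context
  fixes B :: "'e \<Rightarrow> 'p::finite form"
    and nabla :: "('s::wellorder \<rightharpoonup> 'e) \<Rightarrow> 'e \<Rightarrow> 'e"
    and \<Phi> :: "'s \<rightharpoonup> 'e"
  assumes space: "epistemic_space B"
    and fusion: "es_basic_fusion B nabla"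
    and profile: "is_profile \<Phi>"
begin

lemma models_fusion_eq_fusion_choice:
  "models (B (nabla \<Phi> E)) = fusion_choice B nabla \<Phi> (models (B E))"
proof -
  have "B E \<equiv>\<^sub>P B (state_of B (models (B E)))"
    using models_state_of[OF space epistemic_space_models_nonempty[OF space]]
    by (simp add: lequiv_def)
  then have "B (nabla \<Phi> E) \<equiv>\<^sub>P B (nabla \<Phi> (state_of B (models (B E))))"
    using es_basic_fusion_syntax_irrelevance[OF fusion profile profile]
    by (simp add: profile_equiv_def)
  then show ?thesis by (simp add: fusion_choice_def lequiv_def)
qed

lemma fusion_choice_subset:
  assumes "S \<noteq> {}"
  shows "fusion_choice B nabla \<Phi> S \<subseteq> S"
  using es_basic_fusion_success[OF fusion profile, of "state_of B S"] models_state_of[OF space assms]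
  by (simp add: fusion_choice_def entails_def)

lemma fusion_choice_nonempty: "fusion_choice B nabla \<Phi> S \<noteq> {}"
  using epistemic_space_models_nonempty[OF space] by (simp add: fusion_choice_def)

lemma state_of_subset_lequiv:
  assumes "T \<noteq> {}" and "T \<subseteq> S"
  shows "B (state_of B T) \<equiv>\<^sub>P Conj (B (state_of B S)) (B (state_of B T))"
  using assms models_state_of[OF space] by (auto simp: lequiv_def)

lemma fusion_choice_contraction:
  assumes "T \<noteq> {}" and "T \<subseteq> S"
  shows "fusion_choice B nabla \<Phi> S \<inter> T \<subseteq> fusion_choice B nabla \<Phi> T"
  using es_basic_fusion_conj_le[OF fusion profile state_of_subset_lequiv[OF assms]]
    models_state_of[OF space assms(1)]
  by (simp add: fusion_choice_def entails_def)

lemma fusion_choice_expansion: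
  assumes "T \<subseteq> S" and "fusion_choice B nabla \<Phi> S \<inter> T \<noteq> {}"
  shows "fusion_choice B nabla \<Phi> T = fusion_choice B nabla \<Phi> S \<inter> T"
proof
  have T: "T \<noteq> {}" using assms(2) by blast
  have "\<not> (Conj (B (nabla \<Phi> (state_of B S))) (B (state_of B T)) \<turnstile>\<^sub>P Bot)"
    using assms(2) models_state_of[OF space T] by (simp add: fusion_choice_def entails_def)
  then show "fusion_choice B nabla \<Phi> T \<subseteq> fusion_choice B nabla \<Phi> S \<inter> T"
    using es_basic_fusion_conj_ge[OF fusion profile state_of_subset_lequiv[OF T assms(1)]]
      models_state_of[OF space T]
    by (simp add: fusion_choice_def entails_def)
  show "fusion_choice B nabla \<Phi> S \<inter> T \<subseteq> fusion_choice B nabla \<Phi> T"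
    using fusion_choice_contraction[OF T assms(1)] .
qed

lemma fusion_choice_eq_max_set:
  "S \<noteq> {} \<Longrightarrow> fusion_choice B nabla \<Phi> S = max_set S (revealed_pref (fusion_choice B nabla \<Phi>))"
  by (rule choice_eq_max_set_revealed_pref[OF fusion_choice_subset fusion_choice_nonempty
        fusion_choice_contraction fusion_choice_expansion])

lemma total_preorder_fusion_pref: "total_preorder (revealed_pref (fusion_choice B nabla \<Phi>))"
  by (rule total_preorder_revealed_pref[OF fusion_choice_subset fusion_choice_nonempty
        fusion_choice_contraction fusion_choice_expansion])

end

lemma fusion_choice_profile_equiv:
  assumes "es_basic_fusion B nabla" and "is_profile \<Phi>" "is_profile \<Psi>" "profile_equiv \<Phi> \<Psi>"
  shows "fusion_choice B nabla \<Phi> = fusion_choice B nabla \<Psi>"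
proof
  fix S
  show "fusion_choice B nabla \<Phi> S = fusion_choice B nabla \<Psi> S"
    using es_basic_fusion_syntax_irrelevance[OF assms, of "state_of B S" "state_of B S"]
    by (simp add: fusion_choice_def lequiv_def)
qed

lemma basic_fusion_represented:
  fixes B :: "'e \<Rightarrow> 'p::finite form"
    and nabla :: "('s::wellorder \<rightharpoonup> 'e) \<Rightarrow> 'e \<Rightarrow> 'e"
  assumes space: "epistemic_space B" and fusion: "es_basic_fusion B nabla"
  shows "basic_assignment (\<lambda>\<Phi>. revealed_pref (fusion_choice B nabla \<Phi>))"
    and "represents B nabla (\<lambda>\<Phi>. revealed_pref (fusion_choice B nabla \<Phi>))"
  using total_preorder_fusion_pref[OF space fusion] fusion_choice_profile_equiv[OF fusion]
    models_fusion_eq_fusion_choice[OF space fusion] fusion_choice_eq_max_set[OF space fusion]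
    epistemic_space_models_nonempty[OF space]
  by (simp_all add: basic_assignment_def assignment_def represents_def)

lemma representing_assignments_agree:
  fixes B :: "'e \<Rightarrow> 'p::finite form"
  assumes space: "epistemic_space B"
    and "assignment A" "represents B nabla A" "assignment A'" "represents B nabla A'"
    and profile: "is_profile \<Phi>"
  shows "A \<Phi> = A' \<Phi>"
proof (rule total_preorder_eqI_max_set_pairs)
  show "total_preorder (A \<Phi>)" "total_preorder (A' \<Phi>)"
    using assms(2,4) profile by (simp_all add: assignment_def)
  fix w w'
  have "models (B (state_of B {w, w'})) = {w, w'}" by (simp add: models_state_of[OF space])
  then show "max_set {w, w'} (A \<Phi>) = max_set {w, w'} (A' \<Phi>)"
    using assms(3,5) profile unfolding represents_def by metis
qed

lemma represented_basic_fusion: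
  fixes nabla :: "('s::wellorder \<rightharpoonup> 'e) \<Rightarrow> 'e \<Rightarrow> 'e"
  assumes "basic_assignment A" and "represents B nabla A"
  shows "es_basic_fusion B nabla"
  unfolding es_basic_fusion_def
proof (intro conjI allI impI)
  have M: "models (B (nabla \<Phi> E)) = max_set (models (B E)) (A \<Phi>)" if "is_profile \<Phi>" for \<Phi> E
    using assms(2) that by (simp add: represents_def)
  fix \<Phi> :: "'s \<rightharpoonup> 'e" and E E' E''
  assume profile: "is_profile \<Phi>"
  show "B (nabla \<Phi> E) \<turnstile>\<^sub>P B E"
    using M[OF profile] max_set_subset by (simp add: entails_def)
  show "B (nabla \<Phi>' E') \<equiv>\<^sub>P B (nabla \<Phi> E)"
    if "is_profile \<Phi>'" "profile_equiv \<Phi>' \<Phi>" "B E' \<equiv>\<^sub>P B E" for \<Phi>'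
    using that profile assms(1) M by (simp add: basic_assignment_def lequiv_def)
  assume conj: "B E \<equiv>\<^sub>P Conj (B E') (B E'')"
  show "Conj (B (nabla \<Phi> E')) (B E'') \<turnstile>\<^sub>P B (nabla \<Phi> E)"
    using conj M[OF profile] max_set_inter_subset by (simp add: entails_def lequiv_def)
  have "total_preorder (A \<Phi>)"
    using assms(1) profile by (simp add: basic_assignment_def assignment_def)
  then show "B (nabla \<Phi> E) \<turnstile>\<^sub>P Conj (B (nabla \<Phi> E')) (B E'')"
    if "\<not> Conj (B (nabla \<Phi> E')) (B E'') \<turnstile>\<^sub>P Bot"
    using that conj M[OF profile] max_set_inter_if_meets by (simp add: entails_def lequiv_def)
qed

theorem theorem1:
  fixes B :: "'e \<Rightarrow> 'p::finite form"
    and nabla :: "('s::wellorder \<rightharpoonup> 'e) \<Rightarrow> 'e \<Rightarrow> 'e"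
  assumes "epistemic_space B"
  shows "es_basic_fusion B nabla \<longleftrightarrow>
    (\<exists>A. basic_assignment A \<and> represents B nabla A \<and>
       (\<forall>A'. basic_assignment A' \<and> represents B nabla A' \<longrightarrow>
          (\<forall>\<Phi>. is_profile \<Phi> \<longrightarrow> A' \<Phi> = A \<Phi>)))"
proof
  assume fusion: "es_basic_fusion B nabla"
  note basic_fusion_represented[OF assms fusion]
  then show "\<exists>A. basic_assignment A \<and> represents B nabla A \<and>
       (\<forall>A'. basic_assignment A' \<and> represents B nabla A' \<longrightarrow>
          (\<forall>\<Phi>. is_profile \<Phi> \<longrightarrow> A' \<Phi> = A \<Phi>))"
    using representing_assignments_agree[OF assms] by (metis basic_assignment_def)
next
  assume "\<exists>A. basic_assignment A \<and> represents B nabla A \<and>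
       (\<forall>A'. basic_assignment A' \<and> represents B nabla A' \<longrightarrow>
          (\<forall>\<Phi>. is_profile \<Phi> \<longrightarrow> A' \<Phi> = A \<Phi>))"
  then show "es_basic_fusion B nabla" using represented_basic_fusion by blast
qed

end
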